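(* Let $K\subset M^{m\times n}$ be a linear subspace. Let $M_1,\dots,M_{q_1}:M^{m\times n}\to\mathbb{R}$ be all the minors of $m\times n$ matrices, and let $M_{q_1+1},\dots,M_{q_1+mn}:M^{m\times n}\to\mathbb{R}$ be the projections onto the $mn$ entries. Then $\mathcal{M}^{pc}(K)$ consists of Dirac measures if and only if the following holds: for each non-trivial algebraic cone $V\subset K$ there exists $\beta\in\mathbb{R}^{q_1+mn}\setminus\{0\}$ such that $\sum_{k=1}^{q_1+mn}\beta_k M_k(\zeta)\ge 0$ for all $\zeta\in V$ and $\sum_{k=1}^{q_1+mn}\beta_k M_k\not\equiv 0$ on $V$.
   Context: $M^{m\times n}$ denotes real $m\times n$ matrices, identified with $\mathbb{R}^{mn}$. For $X\in M^{m\times n}$, $\hat X$ is the vector of all minors of $X$; a function $f:M^{m\times n}\to\mathbb{R}$ is polyconvex if $f(X)=g(\hat X)$ for some convex $g$. For a set $\mathcal{K}\subset M^{m\times n}$, $\mathcal{M}^{pc}(\mathcal{K})$ is the set of probability measures $\nu$ on $M^{m\times n}$ with $\mathrm{Spt}\,\nu\subset\mathcal{K}$ and $\int f\,d\nu\ge f(\overline X)$ for all polyconvex $f$, where $\overline X=\int X\,d\nu(X)$ (equivalently $\int M(X)\,d\nu=M(\overline X)$ for every minor $M$). A set $S\subset\mathbb{R}^N$ is a cone if $\lambda x\in S$ whenever $x\in S$, $\lambda>0$; an algebraic set is the common zero locus of a collection of real polynomials; an algebraic cone is a cone that is an algebraic set. Non-trivial means not equal to $\{0\}$. *)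

theory Defs
  imports "HOL-Probability.Probability"
begin

text \<open>Matrices in M^{m x n} are elements of real^'n^'m (rows indexed by 'm, columns by 'n).
  The index types carry a linear order only to fix an enumeration of the rows/columns
  used when forming minors (a different order changes minors only by sign).\<close>

definition leibniz_det :: "nat \<Rightarrow> (nat \<Rightarrow> nat \<Rightarrow> real) \<Rightarrow> real" where
  "leibniz_det k A = (\<Sum>p | p permutes {..<k}. of_int (sign p) * (\<Prod>i<k. A i (p i)))"

definition minor :: "('m::{finite,linorder}) set \<Rightarrow> ('n::{finite,linorder}) set \<Rightarrow> real^('n::{finite,linorder})^('m::{finite,linorder}) \<Rightarrow> real" where
  "minor I J X = leibniz_det (card I)
      (\<lambda>a b. X $ (sorted_list_of_set I ! a) $ (sorted_list_of_set J ! b))"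

definition minor_idx :: "(('m::{finite,linorder}) set \<times> ('n::{finite,linorder}) set) set" where
  "minor_idx = {(I, J). I \<noteq> {} \<and> card I = card J}"

definition msupport :: "'a::metric_space measure \<Rightarrow> 'a set" where
  "msupport \<nu> = {x. \<forall>e>0. emeasure \<nu> (ball x e) \<noteq> 0}"

text \<open>Polyconvex measures supported in K (stated via minors, as in the paper).\<close>
definition pc_measures ::
  "(real^('n::{finite,linorder})^('m::{finite,linorder})) set \<Rightarrow> (real^('n::{finite,linorder})^('m::{finite,linorder})) measure set" where
  "pc_measures K = {\<nu>. prob_space \<nu> \<and> sets \<nu> = sets borel \<and> msupport \<nu> \<subseteq> K \<and>
      integrable \<nu> (\<lambda>X. X) \<and>
      (\<forall>(I, J) \<in> minor_idx. integrable \<nu> (minor I J) \<and>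
         (\<integral>X. minor I J X \<partial>\<nu>) = minor I J (\<integral>X. X \<partial>\<nu>))}"

inductive_set poly_fun :: "('a::euclidean_space \<Rightarrow> real) set" where
  const: "(\<lambda>x. c) \<in> poly_fun"
| coord: "b \<in> Basis \<Longrightarrow> (\<lambda>x. x \<bullet> b) \<in> poly_fun"
| add: "p \<in> poly_fun \<Longrightarrow> q \<in> poly_fun \<Longrightarrow> (\<lambda>x. p x + q x) \<in> poly_fun"
| mult: "p \<in> poly_fun \<Longrightarrow> q \<in> poly_fun \<Longrightarrow> (\<lambda>x. p x * q x) \<in> poly_fun"

definition algebraic_set :: "'a::euclidean_space set \<Rightarrow> bool" where
  "algebraic_set V \<longleftrightarrow> (\<exists>P \<subseteq> poly_fun. V = {x. \<forall>p\<in>P. p x = 0})"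

definition is_cone :: "'a::real_vector set \<Rightarrow> bool" where
  "is_cone V \<longleftrightarrow> (\<forall>x\<in>V. \<forall>c>0. c *\<^sub>R x \<in> V)"

definition algebraic_cone :: "'a::euclidean_space set \<Rightarrow> bool" where
  "algebraic_cone V \<longleftrightarrow> is_cone V \<and> algebraic_set V"

definition minor_comb ::
  "(('m::{finite,linorder}) set \<times> ('n::{finite,linorder}) set \<Rightarrow> real) \<Rightarrow> (('m::{finite,linorder}) \<times> ('n::{finite,linorder}) \<Rightarrow> real)
     \<Rightarrow> real^('n::{finite,linorder})^('m::{finite,linorder}) \<Rightarrow> real" where
  "minor_comb \<beta> \<gamma> X = (\<Sum>IJ\<in>minor_idx. \<beta> IJ * minor (fst IJ) (snd IJ) X)
      + (\<Sum>i\<in>UNIV. \<Sum>j\<in>UNIV. \<gamma> (i, j) * X $ i $ j)"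

end

theory Submission
  imports Defs "Jordan_Normal_Form.Determinant"
begin

text \<open>Affine combinations of minors (null Lagrangians) f satisfy \<integral> f d\<nu> = f(\<nu>-bar) for every
  \<nu> in M^pc(K), and this class of functions is invariant under translations X \<mapsto> X + A.
  If \<nu> is not a Dirac mass, the Zariski closure V of the cone generated by supp \<nu> - \<nu>-bar is a
  non-trivial algebraic cone in K. A combination of minors that is nonnegative on V becomes, after
  translation by the mean, a nonnegative null Lagrangian vanishing at \<nu>-bar; hence it vanishes on
  supp \<nu> and then on all of V.

  Conversely, if no combination of minors is nonnegative and not identically zero on V, every linear
  functional that is nonnegative on the image of V under X \<mapsto> (M_k(X))_k vanishes there, so the
  convex cone generated by that image is a linear space. Writing -(M_k(\<zeta>0))_k as a nonnegative
  combination of points (M_k(\<zeta>_i))_k with \<zeta>_i in V gives a finitely supported probability on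
  V, charging \<zeta>0 \<noteq> 0, under which every minor has mean 0: a non-Dirac element of M^pc(K).\<close>

no_notation Matrix.vec_index (infixl "$" 100)

section \<open>Null Lagrangians\<close>

definition null_lagrangians :: "(real^('n::{finite,linorder})^('m::{finite,linorder}) \<Rightarrow> real) set" where
  "null_lagrangians = {f. \<exists>c0 c. \<forall>X. f X = c0 + (\<Sum>IJ\<in>minor_idx. c IJ * minor (fst IJ) (snd IJ) X)}"

lemma finite_minor_idx: "finite (minor_idx :: ('m::{finite,linorder} set \<times> 'n::{finite,linorder} set) set)"
  by (rule finite_subset[of _ UNIV]) auto

lemma null_lagrangians_const: "(\<lambda>X. c) \<in> null_lagrangians"
  unfolding null_lagrangians_def by (intro CollectI exI[of _ c] exI[of _ "\<lambda>_. 0"]) simp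

lemma null_lagrangians_minor:
  assumes "card I = card J"
  shows "minor I J \<in> null_lagrangians"
proof (cases "I = {}")
  case True
  then have "minor I J = (\<lambda>X. 1)"
    using assms by (intro ext) (simp add: minor_def leibniz_det_def)
  then show ?thesis by (simp add: null_lagrangians_const)
next
  case False
  with assms have "(I, J) \<in> minor_idx" by (simp add: minor_idx_def)
  have "minor I J X = 0 + (\<Sum>IJ\<in>minor_idx. of_bool (IJ = (I, J)) * minor (fst IJ) (snd IJ) X)" for X
    using \<open>(I, J) \<in> minor_idx\<close> finite_minor_idx by simp
  then show ?thesis unfolding null_lagrangians_def by (intro CollectI exI allI)
qed

lemma null_lagrangians_add:
  assumes "f \<in> null_lagrangians" "g \<in> null_lagrangians"
  shows "(\<lambda>X. f X + g X) \<in> null_lagrangians"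
proof -
  obtain a c b d where
    "\<forall>X. f X = a + (\<Sum>IJ\<in>minor_idx. c IJ * minor (fst IJ) (snd IJ) X)"
    "\<forall>X. g X = b + (\<Sum>IJ\<in>minor_idx. d IJ * minor (fst IJ) (snd IJ) X)"
    using assms unfolding null_lagrangians_def by blast
  then have "\<forall>X. f X + g X = (a + b) + (\<Sum>IJ\<in>minor_idx. (c IJ + d IJ) * minor (fst IJ) (snd IJ) X)"
    by (simp add: distrib_right sum.distrib)
  then show ?thesis unfolding null_lagrangians_def by (intro CollectI exI)
qed

lemma null_lagrangians_cmult:
  assumes "f \<in> null_lagrangians"
  shows "(\<lambda>X. r * f X) \<in> null_lagrangians"
proof -
  obtain a c where "\<forall>X. f X = a + (\<Sum>IJ\<in>minor_idx. c IJ * minor (fst IJ) (snd IJ) X)"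
    using assms unfolding null_lagrangians_def by blast
  then have "\<forall>X. r * f X = r * a + (\<Sum>IJ\<in>minor_idx. (r * c IJ) * minor (fst IJ) (snd IJ) X)"
    by (simp add: distrib_left sum_distrib_left mult.assoc)
  then show ?thesis unfolding null_lagrangians_def by (intro CollectI exI)
qed

lemma null_lagrangians_sum:
  "(\<And>s. s \<in> S \<Longrightarrow> f s \<in> null_lagrangians) \<Longrightarrow> (\<lambda>X. \<Sum>s\<in>S. f s X) \<in> null_lagrangians"
proof (induction S rule: infinite_finite_induct)
  case (insert x F) then show ?case by (simp add: null_lagrangians_add)
qed (simp_all add: null_lagrangians_const)

lemma det_mat_eq_leibniz_det: "Determinant.det (Matrix.mat k k (\<lambda>(a, b). f a b)) = leibniz_det k f"
proof -
  have "Determinant.det (Matrix.mat k k (\<lambda>(a, b). f a b)) =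
     (\<Sum>p | p permutes {0..<k}. of_int (sign p) * (\<Prod>i = 0..<k. Matrix.mat k k (\<lambda>(a, b). f a b) $$ (i, p i)))"
    by (rule det_def') simp
  also have "\<dots> = (\<Sum>p | p permutes {..<k}. of_int (sign p) * (\<Prod>i<k. f i (p i)))"
  proof (rule sum.cong)
    fix p assume "p \<in> {p. p permutes {..<k}}"
    then have "\<And>i. i < k \<Longrightarrow> p i < k" by (auto dest: permutes_in_image)
    then show "of_int (sign p) * (\<Prod>i = 0..<k. Matrix.mat k k (\<lambda>(a, b). f a b) $$ (i, p i)) =
         of_int (sign p) * (\<Prod>i<k. f i (p i))"
      by (simp add: atLeast0LessThan)
  qed (simp add: atLeast0LessThan)
  finally show ?thesis unfolding leibniz_det_def .
qed

definition shifted_submat ::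
  "nat \<Rightarrow> (nat \<Rightarrow> 'm) \<Rightarrow> (nat \<Rightarrow> 'n) \<Rightarrow> 'm set \<Rightarrow> real^'n^'m \<Rightarrow> real^'n^'m \<Rightarrow> real mat" where
  "shifted_submat k r c R A X = Matrix.mat k k
     (\<lambda>(a, b). X $ r a $ c b + (if r a \<in> R then A $ r a $ c b else 0))"

lemma shifted_submat_carrier: "shifted_submat k r c R A X \<in> carrier_mat k k"
  unfolding shifted_submat_def by simp

lemma mat_delete_shifted_submat:
  assumes "i < k" "j < k"
  shows "mat_delete (shifted_submat k r c R A X) i j
    = shifted_submat (k - 1) (r \<circ> insert_index i) (c \<circ> insert_index j) R A X"
  unfolding mat_delete_def shifted_submat_def using assms
  by (intro eq_matI) (auto simp: insert_index_def)

lemma strict_mono_on_comp_insert_index: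
  assumes "strict_mono_on {..<k} r" "i < k"
  shows "strict_mono_on {..<k - 1} (r \<circ> insert_index i)"
proof (rule strict_mono_onI)
  fix a b assume "a \<in> {..<k - 1}" "b \<in> {..<k - 1}" "a < b"
  then have "insert_index i a < insert_index i b" "insert_index i b < k"
    using assms(2) by (auto simp: insert_index_def)
  then show "(r \<circ> insert_index i) a < (r \<circ> insert_index i) b"
    using assms(1) by (auto simp: strict_mono_on_def)
qed

lemma sorted_list_of_set_strict_mono_image:
  fixes r :: "nat \<Rightarrow> 'a::linorder"
  assumes "strict_mono_on {..<k} r"
  shows "sorted_list_of_set (r ` {..<k}) = map r [0..<k]"
proof -
  have "sorted_wrt (<) (map r [0..<k])"
    using assms by (auto simp: sorted_wrt_map sorted_wrt_iff_nth_less strict_mono_on_def)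
  then have "sorted_list_of_set (set (map r [0..<k])) = map r [0..<k]"
    by (intro sorted_list_of_set.idem_if_sorted_distinct) (auto simp: strict_sorted_iff)
  then show ?thesis by (simp add: atLeast0LessThan)
qed

lemma det_submat_eq_minor:
  assumes r: "strict_mono_on {..<k} r" and c: "strict_mono_on {..<k} c"
  shows "Determinant.det (Matrix.mat k k (\<lambda>(a, b). X $ r a $ c b)) = minor (r ` {..<k}) (c ` {..<k}) X"
proof -
  have k: "card (r ` {..<k}) = k"
    using strict_mono_on_imp_inj_on[OF r] by (simp add: card_image)
  have "map c [0..<k] ! p i = c (p i)" if "p permutes {..<k}" "i < k" for p i
    using permutes_in_image[OF that(1)] that(2) by simp
  then show ?thesis
    unfolding det_mat_eq_leibniz_det minor_def k
      sorted_list_of_set_strict_mono_image[OF r] sorted_list_of_set_strict_mono_image[OF c]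
    unfolding leibniz_det_def by (intro sum.cong refl arg_cong2[where f = "(*)"] prod.cong) simp_all
qed

lemma shifted_submat_cong:
  assumes "\<And>a. a < k \<Longrightarrow> r a \<in> R \<longleftrightarrow> r a \<in> R'"
  shows "shifted_submat k r c R A X = shifted_submat k r c R' A X"
  unfolding shifted_submat_def using assms by (intro cong_mat) auto

lemma det_shifted_submat_insert:
  fixes c :: "nat \<Rightarrow> ('n::finite)" and A X :: "real^'n^('m::{finite,linorder})"
  assumes r: "strict_mono_on {..<k} r" and i: "i < k" and new: "r i \<notin> R"
  defines "M R' \<equiv> shifted_submat k r c R' A X"
  shows "Determinant.det (M (insert (r i) R)) = Determinant.det (M R)
    + (\<Sum>j<k. (A $ r i $ c j * (-1) ^ (i + j))
        * Determinant.det (shifted_submat (k - 1) (r \<circ> insert_index i) (c \<circ> insert_index j) R A X))"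
proof -
  have inj: "r (insert_index i a) \<noteq> r i" if "a < k - 1" for a
    using strict_mono_on_imp_inj_on[OF r] that i
    by (auto simp: insert_index_def inj_on_def split: if_splits)
  have delete: "mat_delete (M (insert (r i) R)) i j
      = shifted_submat (k - 1) (r \<circ> insert_index i) (c \<circ> insert_index j) R A X"
    if "j < k" for j
    unfolding M_def mat_delete_shifted_submat[OF i that] using inj by (intro shifted_submat_cong) auto
  have delete': "mat_delete (M R) i j
      = shifted_submat (k - 1) (r \<circ> insert_index i) (c \<circ> insert_index j) R A X"
    if "j < k" for j
    unfolding M_def by (rule mat_delete_shifted_submat[OF i that])
  have row: "M (insert (r i) R) $$ (i, j) = M R $$ (i, j) + A $ r i $ c j" if "j < k" for j
    unfolding M_def shifted_submat_def using i that new by simp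
  have "Determinant.det (M (insert (r i) R)) = (\<Sum>j<k. M (insert (r i) R) $$ (i, j) * cofactor (M (insert (r i) R)) i j)"
    unfolding M_def by (rule laplace_expansion_row[OF shifted_submat_carrier i])
  also have "\<dots> = (\<Sum>j<k. M R $$ (i, j) * cofactor (M R) i j) + (\<Sum>j<k. A $ r i $ c j * cofactor (M (insert (r i) R)) i j)"
    unfolding sum.distrib[symmetric]
    by (intro sum.cong refl) (simp add: row cofactor_def delete delete' distrib_right)
  also have "(\<Sum>j<k. M R $$ (i, j) * cofactor (M R) i j) = Determinant.det (M R)"
    unfolding M_def by (rule laplace_expansion_row[OF shifted_submat_carrier i, symmetric])
  finally show ?thesis
    by (simp add: cofactor_def delete mult.assoc)
qed

lemma null_lagrangians_det_shifted_submat: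
  fixes R :: "('m::{finite,linorder}) set" and A :: "real^('n::{finite,linorder})^('m::{finite,linorder})"
  assumes "strict_mono_on {..<k} r" "strict_mono_on {..<k} c"
  shows "(\<lambda>X. Determinant.det (shifted_submat k r c R A X)) \<in> null_lagrangians"
  using finite[of R] assms
proof (induction R arbitrary: k r c rule: finite_induct)
  case empty
  have "shifted_submat k r c {} A X = Matrix.mat k k (\<lambda>(a, b). X $ r a $ c b)" for X
    unfolding shifted_submat_def by simp
  moreover have "card (r ` {..<k}) = card (c ` {..<k})"
    using empty.prems by (simp add: card_image strict_mono_on_imp_inj_on)
  ultimately show ?case
    by (simp add: det_submat_eq_minor[OF empty.prems] null_lagrangians_minor)
next
  case (insert x R)
  show ?case
  proof (cases "\<exists>i<k. r i = x")
    case False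
    then have "shifted_submat k r c (insert x R) A X = shifted_submat k r c R A X" for X
      by (intro shifted_submat_cong) auto
    then show ?thesis using insert.IH[OF insert.prems] by simp
  next
    case True
    then obtain i where i: "i < k" "x = r i" by auto
    show ?thesis
      unfolding i(2) det_shifted_submat_insert[OF insert.prems(1) i(1) insert.hyps(2)[unfolded i(2)]]
      using insert.prems i(1)
      by (intro null_lagrangians_add null_lagrangians_sum null_lagrangians_cmult insert.IH strict_mono_on_comp_insert_index) auto
  qed
qed

lemma strict_mono_on_nth_sorted_list_of_set:
  "strict_mono_on {..<card I} (\<lambda>a. sorted_list_of_set I ! a)"
  using sorted_wrt_nth_less[OF strict_sorted_list_of_set[of I]]
  by (cases "finite I") (auto simp: strict_mono_on_def)

lemma null_lagrangians_minor_translate: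
  assumes "card I = card J"
  shows "(\<lambda>X. minor I J (X + A)) \<in> null_lagrangians"
proof -
  let ?r = "\<lambda>a. sorted_list_of_set I ! a" and ?c = "\<lambda>b. sorted_list_of_set J ! b"
  have "minor I J (X + A) = Determinant.det (shifted_submat (card I) ?r ?c UNIV A X)" for X
    unfolding minor_def shifted_submat_def det_mat_eq_leibniz_det[symmetric] by simp
  moreover have "(\<lambda>X. Determinant.det (shifted_submat (card I) ?r ?c UNIV A X)) \<in> null_lagrangians"
    using strict_mono_on_nth_sorted_list_of_set[of I] strict_mono_on_nth_sorted_list_of_set[of J] assms
    by (intro null_lagrangians_det_shifted_submat) simp_all
  ultimately show ?thesis by simp
qed

lemma null_lagrangians_translate:
  assumes "f \<in> null_lagrangians"
  shows "(\<lambda>X. f (X + A)) \<in> null_lagrangians"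
proof -
  obtain c0 c where "\<And>X. f X = c0 + (\<Sum>IJ\<in>minor_idx. c IJ * minor (fst IJ) (snd IJ) X)"
    using assms unfolding null_lagrangians_def by blast
  then show ?thesis
    by (simp, intro null_lagrangians_add null_lagrangians_const null_lagrangians_sum
        null_lagrangians_cmult null_lagrangians_minor_translate) (auto simp: minor_idx_def)
qed

lemma minor_singleton: "minor {i} {j} X = X $ i $ j"
  unfolding minor_def leibniz_det_def by (simp add: lessThan_Suc)

lemma minor_scaleR: "minor I J (t *\<^sub>R X) = t ^ card I * minor I J X"
  unfolding minor_def leibniz_det_def
  by (simp add: sum_distrib_left prod.distrib mult.left_commute)

lemma minor_zero:
  assumes "(I, J) \<in> minor_idx"
  shows "minor I J 0 = 0"
  using minor_scaleR[of I J 0 0] assms by (simp add: minor_idx_def power_0_left)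

lemma minor_comb_as_minors:
  "minor_comb \<beta> \<gamma> X = (\<Sum>IJ\<in>minor_idx. \<beta> IJ * minor (fst IJ) (snd IJ) X)
      + (\<Sum>i\<in>UNIV. \<Sum>j\<in>UNIV. \<gamma> (i, j) * minor {i} {j} X)"
  unfolding minor_comb_def minor_singleton ..

lemma null_lagrangians_minor_comb: "minor_comb \<beta> \<gamma> \<in> null_lagrangians"
  unfolding minor_comb_as_minors[abs_def]
  by (intro null_lagrangians_add null_lagrangians_sum null_lagrangians_cmult null_lagrangians_minor)
    (auto simp: minor_idx_def)

lemma minor_comb_scaleR:
  "minor_comb \<beta> \<gamma> (t *\<^sub>R X) = minor_comb (\<lambda>IJ. \<beta> IJ * t ^ card (fst IJ)) (\<lambda>ij. \<gamma> ij * t) X"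
  unfolding minor_comb_def minor_scaleR by (simp add: mult.assoc)

lemma minor_comb_zero: "minor_comb \<beta> \<gamma> 0 = 0"
  unfolding minor_comb_def by (simp add: minor_zero)

section \<open>Polynomial functions and Zariski closure\<close>

lemma poly_fun_cmult: "p \<in> poly_fun \<Longrightarrow> (\<lambda>x. c * p x) \<in> poly_fun"
  by (rule poly_fun.mult[OF poly_fun.const])

lemma poly_fun_sum: "(\<And>s. s \<in> S \<Longrightarrow> f s \<in> poly_fun) \<Longrightarrow> (\<lambda>x. \<Sum>s\<in>S. f s x) \<in> poly_fun"
proof (induction S rule: infinite_finite_induct)
  case (insert a F) then show ?case by (simp add: poly_fun.add)
qed (simp_all add: poly_fun.const)

lemma poly_fun_prod: "(\<And>s. s \<in> S \<Longrightarrow> f s \<in> poly_fun) \<Longrightarrow> (\<lambda>x. \<Prod>s\<in>S. f s x) \<in> poly_fun"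
proof (induction S rule: infinite_finite_induct)
  case (insert a F) then show ?case by (simp add: poly_fun.mult)
qed (simp_all add: poly_fun.const)

lemma poly_fun_compose_scaleR: "p \<in> poly_fun \<Longrightarrow> (\<lambda>x. p (c *\<^sub>R x)) \<in> poly_fun"
proof (induction rule: poly_fun.induct)
  case (const a) then show ?case by (rule poly_fun.const)
next
  case (coord b) then show ?case using poly_fun_cmult[OF poly_fun.coord[OF coord], of c] by simp
next
  case (add p q) then show ?case using poly_fun.add by blast
next
  case (mult p q) then show ?case using poly_fun.mult by blast
qed

lemma continuous_on_poly_fun: "p \<in> poly_fun \<Longrightarrow> continuous_on UNIV p"
  by (induction rule: poly_fun.induct) (intro continuous_intros; assumption)+

lemma poly_fun_inner_left: "(\<lambda>y. z \<bullet> y) \<in> poly_fun"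
proof -
  have "(\<lambda>y. \<Sum>b\<in>Basis. (z \<bullet> b) * (y \<bullet> b)) \<in> poly_fun"
    by (intro poly_fun_sum poly_fun_cmult poly_fun.coord)
  then show ?thesis by (simp add: euclidean_inner[symmetric])
qed

lemma poly_fun_vec_entry: "(\<lambda>X::real^('n::finite)^('m::finite). X $ i $ j) \<in> poly_fun"
proof -
  have "(\<lambda>X::real^'n^'m. X \<bullet> axis i (axis j 1)) \<in> poly_fun"
    by (rule poly_fun.coord) (simp add: axis_in_Basis_iff)
  then show ?thesis by (simp add: inner_axis)
qed

lemma poly_fun_minor: "minor I J \<in> poly_fun"
  unfolding minor_def[abs_def] leibniz_det_def
  by (intro poly_fun_sum poly_fun_cmult poly_fun_prod poly_fun_vec_entry)

lemma null_lagrangians_subset_poly_fun: "null_lagrangians \<subseteq> poly_fun"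
proof
  fix f :: "real^('n::{finite,linorder})^('m::{finite,linorder}) \<Rightarrow> real"
  assume "f \<in> null_lagrangians"
  then obtain c0 c where "f = (\<lambda>X. c0 + (\<Sum>IJ\<in>minor_idx. c IJ * minor (fst IJ) (snd IJ) X))"
    unfolding null_lagrangians_def by blast
  then show "f \<in> poly_fun"
    by (simp, intro poly_fun.add poly_fun.const poly_fun_sum poly_fun_cmult poly_fun_minor)
qed

definition zariski_closure :: "'a::euclidean_space set \<Rightarrow> 'a set" where
  "zariski_closure S = {x. \<forall>p\<in>poly_fun. (\<forall>z\<in>S. p z = 0) \<longrightarrow> p x = 0}"

lemma algebraic_set_zariski_closure: "algebraic_set (zariski_closure S)"
  unfolding algebraic_set_def zariski_closure_def
  by (intro exI[of _ "{p \<in> poly_fun. \<forall>z\<in>S. p z = 0}"] conjI) blast+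

lemma zariski_closureD:
  "x \<in> zariski_closure S \<Longrightarrow> p \<in> poly_fun \<Longrightarrow> (\<And>z. z \<in> S \<Longrightarrow> p z = 0) \<Longrightarrow> p x = 0"
  unfolding zariski_closure_def by blast

lemma subset_zariski_closure: "S \<subseteq> zariski_closure S"
  unfolding zariski_closure_def by blast

lemma is_cone_zariski_closure:
  assumes "is_cone S"
  shows "is_cone (zariski_closure S)"
  unfolding is_cone_def
proof (intro ballI allI impI)
  fix x and c :: real assume x: "x \<in> zariski_closure S" and "c > 0"
  have "p (c *\<^sub>R x) = 0" if "p \<in> poly_fun" "\<forall>z\<in>S. p z = 0" for p
  proof -
    have "c *\<^sub>R z \<in> S" if "z \<in> S" for z
      using assms \<open>c > 0\<close> that unfolding is_cone_def by blast
    then show ?thesis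
      using zariski_closureD[OF x poly_fun_compose_scaleR[OF that(1)]] that(2) by simp
  qed
  then show "c *\<^sub>R x \<in> zariski_closure S"
    unfolding zariski_closure_def by blast
qed

lemma mem_subspace_if_orthogonal_comp:
  fixes x :: "'a::euclidean_space"
  assumes K: "subspace K" and orth: "\<And>z. z \<in> K\<^sup>\<bottom> \<Longrightarrow> z \<bullet> x = 0"
  shows "x \<in> K"
proof -
  have "x \<in> K\<^sup>\<bottom>\<^sup>\<bottom>"
    using orth by (simp add: orthogonal_comp_def real_inner_class.orthogonal_def inner_commute)
  then show ?thesis using orthogonal_comp_self[OF K] by simp
qed

lemma zariski_closure_subset_subspace:
  assumes K: "subspace K" and "S \<subseteq> K"
  shows "zariski_closure S \<subseteq> K"
proof
  fix x assume x: "x \<in> zariski_closure S"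
  show "x \<in> K"
  proof (rule mem_subspace_if_orthogonal_comp[OF K])
    fix z assume "z \<in> K\<^sup>\<bottom>"
    then have "\<forall>y\<in>S. z \<bullet> y = 0"
      using \<open>S \<subseteq> K\<close> by (auto simp: orthogonal_comp_def real_inner_class.orthogonal_def inner_commute)
    then show "z \<bullet> x = 0"
      using zariski_closureD[OF x poly_fun_inner_left] by simp
  qed
qed

section \<open>Measures and their support\<close>

lemma AE_in_msupport:
  fixes \<nu> :: "'a::{metric_space, second_countable_topology} measure"
  assumes "sets \<nu> = sets borel"
  shows "AE x in \<nu>. x \<in> msupport \<nu>"
proof -
  let ?F = "{ball x e | x e. e > 0 \<and> emeasure \<nu> (ball x e) = 0}"
  obtain F where F: "F \<subseteq> ?F" "countable F" "\<Union>F = \<Union>?F"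
    using Lindelof[of ?F] by auto
  have "S \<in> null_sets \<nu>" if "S \<in> F" for S
    using that F(1) assms by (auto intro!: null_setsI)
  then have "\<Union>F \<in> null_sets \<nu>"
    using null_sets_UN'[OF F(2), of id \<nu>] by simp
  moreover have "{x \<in> space \<nu>. x \<notin> msupport \<nu>} \<subseteq> \<Union>F"
    using F(3) unfolding msupport_def by force
  ultimately show ?thesis by (rule AE_I')
qed

lemma eq_return_if_msupport_subset:
  fixes \<nu> :: "'a::{metric_space, second_countable_topology} measure"
  assumes "prob_space \<nu>" "sets \<nu> = sets borel" "msupport \<nu> \<subseteq> {a}"
  shows "\<nu> = return borel a"
proof (rule measure_eqI)
  fix A assume A: "A \<in> sets \<nu>"
  have ae: "AE x in \<nu>. x = a"
    using AE_in_msupport[OF assms(2)] by eventually_elim (use assms(3) in auto)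
  show "emeasure \<nu> A = emeasure (return borel a) A"
  proof (cases "a \<in> A")
    case True
    have "AE x in \<nu>. x \<in> A" using ae by eventually_elim (use True in auto)
    then show ?thesis
      using True A assms(2) prob_space.emeasure_eq_1_AE[OF assms(1) A] by simp
  next
    case False
    have "AE x in \<nu>. x \<notin> A" using ae by eventually_elim (use False in auto)
    then show ?thesis
      using False A assms(2) by (simp add: AE_iff_null_sets null_setsD1)
  qed
qed (use assms in simp)

lemma continuous_AE_zero_on_msupport:
  fixes g :: "'a::metric_space \<Rightarrow> real"
  assumes "sets \<nu> = sets borel" "continuous_on UNIV g" "AE x in \<nu>. g x = 0"
    and x: "x \<in> msupport \<nu>"
  shows "g x = 0"
proof (rule ccontr)
  assume "g x \<noteq> 0"
  moreover have "open {y. g y \<noteq> 0}"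
    using assms(2) by (intro open_Collect_neq) (auto intro: continuous_on_const)
  ultimately obtain e where e: "e > 0" "ball x e \<subseteq> {y. g y \<noteq> 0}"
    by (auto simp: open_contains_ball)
  have "AE y in \<nu>. y \<notin> ball x e" using assms(3) by eventually_elim (use e in auto)
  then have "emeasure \<nu> (ball x e) = 0"
    using assms(1) by (simp add: AE_iff_null_sets null_setsD1)
  then show False using x e(1) unfolding msupport_def by blast
qed

lemma pc_measures_integral_null_lagrangian:
  assumes \<nu>: "\<nu> \<in> pc_measures K" and f: "f \<in> null_lagrangians"
  shows "integrable \<nu> f" "integral\<^sup>L \<nu> f = f (\<integral>X. X \<partial>\<nu>)"
proof -
  interpret prob_space \<nu> using \<nu> unfolding pc_measures_def by blast
  have minor: "integrable \<nu> (minor (fst IJ) (snd IJ))"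
    "integral\<^sup>L \<nu> (minor (fst IJ) (snd IJ)) = minor (fst IJ) (snd IJ) (\<integral>X. X \<partial>\<nu>)"
    if "IJ \<in> minor_idx" for IJ
    using \<nu> that unfolding pc_measures_def by auto
  obtain c0 c where f_eq: "f = (\<lambda>X. c0 + (\<Sum>IJ\<in>minor_idx. c IJ * minor (fst IJ) (snd IJ) X))"
    using f unfolding null_lagrangians_def by blast
  show "integrable \<nu> f" unfolding f_eq using minor(1) by auto
  show "integral\<^sup>L \<nu> f = f (\<integral>X. X \<partial>\<nu>)" unfolding f_eq using minor by (simp add: prob_space)
qed

lemma pc_measures_mean_in_subspace:
  assumes K: "subspace K" and \<nu>: "\<nu> \<in> pc_measures K"
  shows "(\<integral>X. X \<partial>\<nu>) \<in> K"
proof (rule mem_subspace_if_orthogonal_comp[OF K])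
  have sets: "sets \<nu> = sets borel" and supp: "msupport \<nu> \<subseteq> K" and int: "integrable \<nu> (\<lambda>X. X)"
    using \<nu> unfolding pc_measures_def by blast+
  fix z assume z: "z \<in> K\<^sup>\<bottom>"
  have "AE X in \<nu>. z \<bullet> X = 0"
    using AE_in_msupport[OF sets] by eventually_elim
      (use supp z in \<open>auto simp: orthogonal_comp_def real_inner_class.orthogonal_def inner_commute\<close>)
  then have "(\<integral>X. z \<bullet> X \<partial>\<nu>) = 0" by (rule integral_eq_zero_AE)
  then show "z \<bullet> (\<integral>X. X \<partial>\<nu>) = 0" using int by simp
qed

lemma pc_measures_null_lagrangian_vanishes_on_msupport:
  assumes \<nu>: "\<nu> \<in> pc_measures K" and f: "f \<in> null_lagrangians"
    and nonneg: "\<And>X. X \<in> msupport \<nu> \<Longrightarrow> f X \<ge> 0" and zero: "f (\<integral>X. X \<partial>\<nu>) = 0"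
    and x: "x \<in> msupport \<nu>"
  shows "f x = 0"
proof -
  have sets: "sets \<nu> = sets borel" using \<nu> unfolding pc_measures_def by blast
  have "AE X in \<nu>. 0 \<le> f X"
    using AE_in_msupport[OF sets] by eventually_elim (rule nonneg)
  then have "AE X in \<nu>. f X = 0"
    using integral_nonneg_eq_0_iff_AE pc_measures_integral_null_lagrangian[OF \<nu> f] zero by metis
  moreover have "continuous_on UNIV f"
    using f null_lagrangians_subset_poly_fun continuous_on_poly_fun by blast
  ultimately show ?thesis using continuous_AE_zero_on_msupport[OF sets _ _ x] by blast
qed

section \<open>Nonnegative combinations of minors force Dirac masses\<close>

definition has_nonneg_minor_comb :: "(real^('n::{finite,linorder})^('m::{finite,linorder})) set \<Rightarrow> bool" where
  "has_nonneg_minor_comb V \<longleftrightarrow> (\<exists>\<beta> \<gamma>. (\<forall>\<zeta>\<in>V. 0 \<le> minor_comb \<beta> \<gamma> \<zeta>) \<and> (\<exists>\<zeta>\<in>V. minor_comb \<beta> \<gamma> \<zeta> \<noteq> 0))"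

lemma minor_comb_nonzero_imp_coeffs_nonzero:
  assumes "minor_comb \<beta> \<gamma> X \<noteq> 0"
  shows "(\<exists>IJ\<in>minor_idx. \<beta> IJ \<noteq> 0) \<or> (\<exists>ij. \<gamma> ij \<noteq> 0)"
proof (rule ccontr)
  assume "\<not> ?thesis"
  then have "minor_comb \<beta> \<gamma> X = 0" unfolding minor_comb_def by (simp add: sum.neutral)
  with assms show False ..
qed

lemma has_nonneg_minor_comb_iff:
  "has_nonneg_minor_comb V \<longleftrightarrow> (\<exists>\<beta> \<gamma>. ((\<exists>IJ\<in>minor_idx. \<beta> IJ \<noteq> 0) \<or> (\<exists>ij. \<gamma> ij \<noteq> 0)) \<and>
     (\<forall>\<zeta>\<in>V. minor_comb \<beta> \<gamma> \<zeta> \<ge> 0) \<and> (\<exists>\<zeta>\<in>V. minor_comb \<beta> \<gamma> \<zeta> \<noteq> 0))"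
proof
  assume "has_nonneg_minor_comb V"
  then obtain \<beta> \<gamma> \<zeta> where "\<forall>\<zeta>\<in>V. 0 \<le> minor_comb \<beta> \<gamma> \<zeta>" "\<zeta> \<in> V" "minor_comb \<beta> \<gamma> \<zeta> \<noteq> 0"
    unfolding has_nonneg_minor_comb_def by blast
  then show "\<exists>\<beta> \<gamma>. ((\<exists>IJ\<in>minor_idx. \<beta> IJ \<noteq> 0) \<or> (\<exists>ij. \<gamma> ij \<noteq> 0)) \<and>
     (\<forall>\<zeta>\<in>V. minor_comb \<beta> \<gamma> \<zeta> \<ge> 0) \<and> (\<exists>\<zeta>\<in>V. minor_comb \<beta> \<gamma> \<zeta> \<noteq> 0)"
    by (intro exI[of _ \<beta>] exI[of _ \<gamma>] conjI bexI[of _ \<zeta>] minor_comb_nonzero_imp_coeffs_nonzero) simp_all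
qed (unfold has_nonneg_minor_comb_def, elim exE conjE, intro exI conjI; assumption)

definition msupport_cone :: "'a::real_normed_vector measure \<Rightarrow> 'a \<Rightarrow> 'a set" where
  "msupport_cone \<nu> A = {t *\<^sub>R (x - A) | t x. t > 0 \<and> x \<in> msupport \<nu>}"

lemma is_cone_msupport_cone: "is_cone (msupport_cone \<nu> A)"
  unfolding msupport_cone_def is_cone_def by (force intro: exI[of _ "_ * _"])

lemma msupport_cone_subset_subspace:
  assumes K: "subspace K" and "msupport \<nu> \<subseteq> K" "A \<in> K"
  shows "msupport_cone \<nu> A \<subseteq> K"
  unfolding msupport_cone_def using assms(2,3) by (auto intro!: subspace_scale[OF K] subspace_diff[OF K])

lemma pc_measures_minor_comb_vanishes_on_msupport_cone:
  assumes \<nu>: "\<nu> \<in> pc_measures K"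
    and nonneg: "\<forall>\<zeta>\<in>msupport_cone \<nu> (\<integral>X. X \<partial>\<nu>). 0 \<le> minor_comb \<beta> \<gamma> \<zeta>"
    and z: "z \<in> msupport_cone \<nu> (\<integral>X. X \<partial>\<nu>)"
  shows "minor_comb \<beta> \<gamma> z = 0"
proof -
  define A where "A = (\<integral>X. X \<partial>\<nu>)"
  obtain t x where z_eq: "z = t *\<^sub>R (x - A)" and "t > 0" and x: "x \<in> msupport \<nu>"
    using z unfolding msupport_cone_def A_def by blast
  define f where "f X = minor_comb (\<lambda>IJ. \<beta> IJ * t ^ card (fst IJ)) (\<lambda>ij. \<gamma> ij * t) (X + - A)" for X
  have f_eq: "f X = minor_comb \<beta> \<gamma> (t *\<^sub>R (X - A))" for X
    unfolding f_def minor_comb_scaleR by simp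
  have "f \<in> null_lagrangians"
    unfolding f_def by (intro null_lagrangians_translate null_lagrangians_minor_comb)
  moreover have "f X \<ge> 0" if "X \<in> msupport \<nu>" for X
    unfolding f_eq using nonneg that \<open>t > 0\<close> unfolding msupport_cone_def A_def by blast
  moreover have "f A = 0" unfolding f_eq by (simp add: minor_comb_zero)
  ultimately have "f x = 0"
    using pc_measures_null_lagrangian_vanishes_on_msupport[OF \<nu> _ _ _ x] unfolding A_def by blast
  then show ?thesis unfolding z_eq f_eq .
qed

lemma pc_measures_eq_return:
  assumes K: "subspace K" and \<nu>: "\<nu> \<in> pc_measures K"
    and nonneg_comb: "\<And>V. algebraic_cone V \<Longrightarrow> V \<subseteq> K \<Longrightarrow> V \<noteq> {} \<Longrightarrow> V \<noteq> {0} \<Longrightarrow> has_nonneg_minor_comb V"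
  shows "\<exists>x. \<nu> = return borel x"
proof -
  have prob: "prob_space \<nu>" and sets: "sets \<nu> = sets borel" and supp: "msupport \<nu> \<subseteq> K"
    using \<nu> unfolding pc_measures_def by blast+
  define A where "A = (\<integral>X. X \<partial>\<nu>)"
  have "A \<in> K" unfolding A_def using pc_measures_mean_in_subspace[OF K \<nu>] .
  show ?thesis
  proof (cases "msupport \<nu> \<subseteq> {A}")
    case True
    then show ?thesis using eq_return_if_msupport_subset[OF prob sets] by blast
  next
    case False
    then obtain x0 where x0: "x0 \<in> msupport \<nu>" "x0 \<noteq> A" by blast
    let ?V = "zariski_closure (msupport_cone \<nu> A)"
    have "x0 - A \<in> msupport_cone \<nu> A"
      unfolding msupport_cone_def using x0(1) by (force intro: exI[of _ 1])
    then have "algebraic_cone ?V" "?V \<subseteq> K" "x0 - A \<in> ?V"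
      using subset_zariski_closure msupport_cone_subset_subspace[OF K supp \<open>A \<in> K\<close>]
      by (auto simp: algebraic_cone_def algebraic_set_zariski_closure is_cone_zariski_closure
          is_cone_msupport_cone zariski_closure_subset_subspace[OF K])
    then obtain \<beta> \<gamma> where nonneg: "\<forall>\<zeta>\<in>?V. 0 \<le> minor_comb \<beta> \<gamma> \<zeta>"
      and nonzero: "\<exists>\<zeta>\<in>?V. minor_comb \<beta> \<gamma> \<zeta> \<noteq> 0"
      using nonneg_comb[of ?V] x0(2) unfolding has_nonneg_minor_comb_def by force
    have "minor_comb \<beta> \<gamma> z = 0" if "z \<in> msupport_cone \<nu> A" for z
      using pc_measures_minor_comb_vanishes_on_msupport_cone[OF \<nu>] nonneg subset_zariski_closure that
      unfolding A_def by blast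
    then have "minor_comb \<beta> \<gamma> \<zeta> = 0" if "\<zeta> \<in> ?V" for \<zeta>
      using zariski_closureD[OF that] null_lagrangians_subset_poly_fun null_lagrangians_minor_comb by blast
    with nonzero show ?thesis by blast
  qed
qed

section \<open>Non-Dirac polyconvex measures\<close>

lemma span_subset_closure_convex_cone_hull:
  fixes S :: "'a::euclidean_space set"
  assumes vanish: "\<And>a. \<forall>x\<in>S. 0 \<le> a \<bullet> x \<Longrightarrow> \<forall>x\<in>S. a \<bullet> x = 0"
  shows "span S \<subseteq> closure (convex_cone hull S)"
proof
  let ?C = "convex_cone hull S"
  fix x assume x: "x \<in> span S"
  show "x \<in> closure ?C"
  proof (rule ccontr)
    assume "x \<notin> closure ?C"
    then obtain a b where ab: "a \<bullet> x < b" "\<forall>y\<in>closure ?C. b < a \<bullet> y"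
      using separating_hyperplane_closed_point[OF convex_closure[OF convex_convex_cone_hull]]
      by blast
    have "b < 0"
      using ab(2) closure_subset convex_cone_hull_contains_0 by fastforce
    have "0 \<le> a \<bullet> s" if "s \<in> S" for s
    proof (rule ccontr)
      assume neg: "\<not> 0 \<le> a \<bullet> s"
      have "(b / (a \<bullet> s)) *\<^sub>R s \<in> ?C"
        using \<open>b < 0\<close> neg that
        by (intro convex_cone_hull_mul hull_inc) (auto simp: divide_nonpos_neg)
      then have "b < a \<bullet> ((b / (a \<bullet> s)) *\<^sub>R s)" using ab(2) closure_subset by blast
      with neg show False by simp
    qed
    then have "\<forall>s\<in>S. a \<bullet> s = 0" by (intro vanish) blast
    then have "a \<bullet> x = 0"
      using span_induct[OF x, of "\<lambda>x. a \<bullet> x = 0"] subspace_hyperplane[of a] by blast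
    with ab(1) \<open>b < 0\<close> show False by simp
  qed
qed

lemma convex_cone_hull_eq_span:
  fixes S :: "'a::euclidean_space set"
  assumes "\<And>a. \<forall>x\<in>S. 0 \<le> a \<bullet> x \<Longrightarrow> \<forall>x\<in>S. a \<bullet> x = 0"
  shows "convex_cone hull S = span S"
proof -
  have C_span: "convex_cone hull S \<subseteq> span S"
    by (intro hull_minimal span_superset convex_cone_span)
  then have "closure (convex_cone hull S) = span S"
    using closure_minimal[OF C_span closed_span] span_subset_closure_convex_cone_hull[OF assms] by blast
  \<comment> \<open>a convex set dense in a subspace contains the relative interior of its closure, i.e. the subspace\<close>
  then have "rel_interior (convex_cone hull S) = span S"
    using convex_rel_interior_closure[OF convex_convex_cone_hull]
      rel_interior_affine[OF subspace_imp_affine[OF subspace_span]] by metis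
  with C_span rel_interior_subset show ?thesis by blast
qed

lemma neg_in_convex_cone_hull_imageE:
  fixes f :: "'a \<Rightarrow> 'b::real_vector"
  assumes x0: "x0 \<in> V" and neg: "- f x0 \<in> convex_cone hull (f ` V)"
  obtains k :: nat and c u g where "c \<ge> 0" "\<forall>i\<in>{1..k}. 0 \<le> u i \<and> g i \<in> V" "sum u {1..k} = 1"
    "f x0 + c *\<^sub>R (\<Sum>i = 1..k. u i *\<^sub>R f (g i)) = 0"
proof -
  obtain c y where cy: "- f x0 = c *\<^sub>R y" "c \<ge> 0" "y \<in> convex hull (f ` V)"
    using neg x0 convex_cone_hull_convex_hull_nonempty[of "f ` V"] by auto
  have "\<exists>k u z. (\<forall>i\<in>{1::nat..k}. 0 \<le> u i \<and> z i \<in> f ` V) \<and> sum u {1..k} = 1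
      \<and> (\<Sum>i = 1..k. u i *\<^sub>R z i) = y"
    using cy(3) unfolding convex_hull_indexed mem_Collect_eq .
  then obtain k :: nat and u z where u: "\<forall>i\<in>{1..k}. 0 \<le> u i \<and> z i \<in> f ` V" "sum u {1..k} = 1"
    and y: "(\<Sum>i = 1..k. u i *\<^sub>R z i) = y"
    by blast
  have "\<exists>g. \<forall>i\<in>{1..k}. g i \<in> V \<and> f (g i) = z i"
    using u(1) by (intro bchoice) force
  then obtain g where g: "\<forall>i\<in>{1..k}. g i \<in> V \<and> f (g i) = z i"
    by blast
  have "(\<Sum>i = 1..k. u i *\<^sub>R f (g i)) = y"
    unfolding y[symmetric] using g by (intro sum.cong) auto
  then have "f x0 + c *\<^sub>R (\<Sum>i = 1..k. u i *\<^sub>R f (g i)) = 0"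
    using cy(1)[symmetric] by simp
  with cy(2) u g show thesis by (intro that) auto
qed

lemma
  assumes "finite A" "\<And>i. 0 \<le> w i" "\<And>i. i \<notin> A \<Longrightarrow> w i = 0" "sum w A = 1"
  shows pmf_embed_pmf_finite: "pmf (embed_pmf w) = w"
    and set_embed_pmf_finite: "set_pmf (embed_pmf w) \<subseteq> A"
proof -
  have "(\<integral>\<^sup>+i. ennreal (w i) \<partial>count_space UNIV) = 1"
    using assms by (subst nn_integral_count_space'[of A]) (auto simp: sum_ennreal)
  then show "pmf (embed_pmf w) = w" "set_pmf (embed_pmf w) \<subseteq> A"
    using assms(2,3) by (auto simp: pmf_embed_pmf set_embed_pmf)
qed

lemma balanced_pmf_exists:
  fixes f :: "'a \<Rightarrow> 'b::euclidean_space"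
  assumes x0: "x0 \<in> V" and neg: "- f x0 \<in> convex_cone hull (f ` V)"
  shows "\<exists>q. finite (set_pmf q) \<and> set_pmf q \<subseteq> V \<and> x0 \<in> set_pmf q \<and> measure_pmf.expectation q f = 0"
proof -
  obtain k :: nat and c u g where "c \<ge> 0" and u: "\<forall>i\<in>{1..k}. 0 \<le> u i \<and> g i \<in> V" "sum u {1..k} = 1"
    and balanced: "f x0 + c *\<^sub>R (\<Sum>i = 1..k. u i *\<^sub>R f (g i)) = 0"
    using neg_in_convex_cone_hull_imageE[OF assms] .
  define h where "h i = (if i = 0 then x0 else g i)" for i :: nat
  define w where "w i = (if i = 0 then 1 else if i \<in> {1..k} then c * u i else 0) / (1 + c)" for i :: nat
  have sum_w: "(\<Sum>i\<in>{0..k}. w i *\<^sub>R F i) = (1 / (1 + c)) *\<^sub>R (F 0 + c *\<^sub>R (\<Sum>i = 1..k. u i *\<^sub>R F i))"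
    for F :: "nat \<Rightarrow> 'c::real_vector"
  proof -
    have "(\<Sum>i = 1..k. w i *\<^sub>R F i) = (c / (1 + c)) *\<^sub>R (\<Sum>i = 1..k. u i *\<^sub>R F i)"
      unfolding scaleR_sum_right by (intro sum.cong) (auto simp: w_def)
    then show ?thesis by (simp add: sum.atLeast_Suc_atMost w_def scaleR_add_right)
  qed
  have "1 + c > 0" using \<open>c \<ge> 0\<close> by simp
  then have "(\<Sum>i\<in>{0..k}. w i) = 1"
    using sum_w[of "\<lambda>_. 1::real"] u(2) by simp
  moreover have "0 \<le> w i" for i
    using u(1) \<open>c \<ge> 0\<close> by (simp add: w_def)
  moreover have "w i = 0" if "i \<notin> {0..k}" for i
    using that by (simp add: w_def)
  ultimately have pmf_p: "pmf (embed_pmf w) = w" and set_p: "set_pmf (embed_pmf w) \<subseteq> {0..k}"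
    by (intro pmf_embed_pmf_finite set_embed_pmf_finite; simp)+
  have charged_0: "0 \<in> set_pmf (embed_pmf w)"
    unfolding set_pmf_iff pmf_p using \<open>1 + c > 0\<close> by (simp add: w_def)
  define q where "q = map_pmf h (embed_pmf w)"
  have "finite (set_pmf q)"
    unfolding q_def using finite_subset[OF set_p] by simp
  moreover have "set_pmf q \<subseteq> V"
    unfolding q_def using set_p u(1) x0 by (auto simp: h_def)
  moreover have "x0 \<in> set_pmf q"
    unfolding q_def set_map_pmf using charged_0 by (rule image_eqI[rotated]) (simp add: h_def)
  moreover have "measure_pmf.expectation q f = (\<Sum>i\<in>{0..k}. w i *\<^sub>R f (h i))"
    unfolding q_def integral_map_pmf using set_p
    by (subst integral_measure_pmf[of "{0..k}"]) (auto simp: pmf_p)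
  moreover have "(\<Sum>i\<in>{0..k}. w i *\<^sub>R f (h i)) = 0"
    unfolding sum_w using balanced by (simp add: h_def)
  ultimately show ?thesis by auto
qed

text \<open>The vector (M_1(X), ..., M_(q_1 + mn)(X)) of all minors and entries of X; the coordinates
  indexed by pairs (I, J) that do not describe a minor are padded with 0.\<close>
definition minors_vec ::
  "real^('n::{finite,linorder})^('m::{finite,linorder}) \<Rightarrow> real^(('m set \<times> 'n set) + ('m \<times> 'n))" where
  "minors_vec X = (\<chi> k. case k of
      Inl IJ \<Rightarrow> (if IJ \<in> minor_idx then minor (fst IJ) (snd IJ) X else 0)
    | Inr ij \<Rightarrow> X $ fst ij $ snd ij)"

lemma minors_vec_Inl: "IJ \<in> minor_idx \<Longrightarrow> minors_vec X $ Inl IJ = minor (fst IJ) (snd IJ) X"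
  unfolding minors_vec_def by simp

lemma minors_vec_Inr: "minors_vec X $ Inr (i, j) = X $ i $ j"
  unfolding minors_vec_def by simp

lemma inner_minors_vec: "a \<bullet> minors_vec X = minor_comb (\<lambda>IJ. a $ Inl IJ) (\<lambda>ij. a $ Inr ij) X"
proof -
  have "a \<bullet> minors_vec X = (\<Sum>IJ\<in>UNIV. a $ Inl IJ * minors_vec X $ Inl IJ)
      + (\<Sum>ij\<in>UNIV. a $ Inr ij * minors_vec X $ Inr ij)"
    unfolding inner_vec_def by (simp add: sum.Plus comp_def flip: UNIV_Plus_UNIV)
  also have "(\<Sum>IJ\<in>UNIV. a $ Inl IJ * minors_vec X $ Inl IJ)
      = (\<Sum>IJ\<in>minor_idx. a $ Inl IJ * minor (fst IJ) (snd IJ) X)"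
    unfolding minors_vec_def by (simp add: if_distrib[of "\<lambda>x. _ * x"] sum.If_cases)
  also have "(\<Sum>ij\<in>UNIV. a $ Inr ij * minors_vec X $ Inr ij) = (\<Sum>i\<in>UNIV. \<Sum>j\<in>UNIV. a $ Inr (i, j) * X $ i $ j)"
    unfolding UNIV_Times_UNIV[symmetric] sum.cartesian_product
    by (simp add: minors_vec_def case_prod_unfold)
  finally show ?thesis unfolding minor_comb_def .
qed

lemma
  fixes q :: "'a::{metric_space, second_countable_topology} pmf"
  shows prob_space_distr_pmf_borel: "prob_space (distr (measure_pmf q) borel (\<lambda>x. x))"
    and sets_distr_pmf_borel: "sets (distr (measure_pmf q) borel (\<lambda>x. x)) = sets borel"
    and emeasure_distr_pmf_borel_singleton: "emeasure (distr (measure_pmf q) borel (\<lambda>x. x)) {x} = pmf q x"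
  by (auto intro: prob_space.prob_space_distr[OF prob_space_measure_pmf]
      simp: emeasure_distr emeasure_pmf_single)

lemma integral_distr_pmf_borel:
  fixes q :: "'a::{metric_space, second_countable_topology} pmf"
    and f :: "'a \<Rightarrow> 'b::{banach, second_countable_topology}"
  assumes "finite (set_pmf q)" "f \<in> borel_measurable borel"
  shows "integrable (distr (measure_pmf q) borel (\<lambda>x. x)) f"
    and "integral\<^sup>L (distr (measure_pmf q) borel (\<lambda>x. x)) f = (\<Sum>x\<in>set_pmf q. pmf q x *\<^sub>R f x)"
  using assms by (simp_all add: integrable_distr_eq integral_distr integrable_measure_pmf_finite
      integral_measure_pmf[of "set_pmf q"])

lemma msupport_distr_pmf_borel:
  fixes q :: "'a::{metric_space, second_countable_topology} pmf"
  assumes "finite (set_pmf q)"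
  shows "msupport (distr (measure_pmf q) borel (\<lambda>x. x)) \<subseteq> set_pmf q"
proof
  fix x assume x: "x \<in> msupport (distr (measure_pmf q) borel (\<lambda>x. x))"
  show "x \<in> set_pmf q"
  proof (rule ccontr)
    assume "x \<notin> set_pmf q"
    moreover have "open (- set_pmf q)"
      using finite_imp_closed[OF assms] by (simp add: open_Compl)
    ultimately obtain e where e: "e > 0" "ball x e \<subseteq> - set_pmf q"
      by (auto simp: open_contains_ball)
    then have "set_pmf q \<inter> ball x e = {}" by blast
    then have "emeasure (measure_pmf q) (ball x e) = 0"
      by (simp add: measure_pmf.emeasure_eq_measure measure_pmf_zero_iff)
    with x e(1) show False
      unfolding msupport_def by (simp add: emeasure_distr)
  qed
qed

lemma
  fixes q :: "(real^('n::{finite,linorder})^('m::{finite,linorder})) pmf"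
  assumes fin: "finite (set_pmf q)" and "set_pmf q \<subseteq> K"
    and balanced: "measure_pmf.expectation q minors_vec = 0"
  shows distr_balanced_pmf_in_pc_measures: "distr (measure_pmf q) borel (\<lambda>x. x) \<in> pc_measures K"
    and mean_distr_balanced_pmf: "(\<integral>X. X \<partial>distr (measure_pmf q) borel (\<lambda>x. x)) = 0"
proof -
  define \<nu> where "\<nu> = distr (measure_pmf q) borel (\<lambda>x. x)"
  have "(\<Sum>x\<in>set_pmf q. pmf q x *\<^sub>R minors_vec x) = 0"
    using balanced fin by (simp add: integral_measure_pmf[of "set_pmf q"])
  from arg_cong[OF this, of "\<lambda>v. v $ k" for k]
  have sum_zero: "(\<Sum>x\<in>set_pmf q. pmf q x * minors_vec x $ k) = 0" for k
    by simp
  have borel_minor: "minor I J \<in> borel_measurable borel" for I J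
    by (intro borel_measurable_continuous_onI continuous_on_poly_fun poly_fun_minor)
  have mean: "(\<integral>X. X \<partial>\<nu>) = 0"
  proof -
    have "(\<Sum>x\<in>set_pmf q. pmf q x *\<^sub>R x) $ i $ j = 0" for i j
      using sum_zero[of "Inr (i, j)"] by (simp add: minors_vec_Inr)
    then have "(\<Sum>x\<in>set_pmf q. pmf q x *\<^sub>R x) $ i = 0" for i
      by (simp add: Finite_Cartesian_Product.vec_eq_iff)
    then show ?thesis
      unfolding \<nu>_def integral_distr_pmf_borel(2)[OF fin measurable_ident_sets[OF refl]]
      by (simp add: Finite_Cartesian_Product.vec_eq_iff)
  qed
  have "\<nu> \<in> pc_measures K"
    unfolding pc_measures_def
  proof (intro CollectI conjI ballI)
    show "prob_space \<nu>" "sets \<nu> = sets borel"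
      unfolding \<nu>_def by (rule prob_space_distr_pmf_borel sets_distr_pmf_borel)+
    show "msupport \<nu> \<subseteq> K"
      unfolding \<nu>_def using msupport_distr_pmf_borel[OF fin] \<open>set_pmf q \<subseteq> K\<close> by blast
    show "integrable \<nu> (\<lambda>X. X)"
      unfolding \<nu>_def by (rule integral_distr_pmf_borel(1)[OF fin measurable_ident_sets[OF refl]])
  next
    fix IJ :: "'m set \<times> 'n set" assume "IJ \<in> minor_idx"
    moreover obtain I J where IJ: "IJ = (I, J)" by fastforce
    ultimately have idx: "(I, J) \<in> minor_idx" by simp
    have "integral\<^sup>L \<nu> (minor I J) = 0"
      unfolding \<nu>_def integral_distr_pmf_borel(2)[OF fin borel_minor]
      using sum_zero[of "Inl (I, J)"] by (simp add: minors_vec_Inl[OF idx])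
    then show "case IJ of (I, J) \<Rightarrow> integrable \<nu> (minor I J) \<and> integral\<^sup>L \<nu> (minor I J) = minor I J (\<integral>X. X \<partial>\<nu>)"
      using integral_distr_pmf_borel(1)[OF fin borel_minor] unfolding IJ mean \<nu>_def[symmetric]
      by (simp add: minor_zero[OF idx])
  qed
  with mean show "distr (measure_pmf q) borel (\<lambda>x. x) \<in> pc_measures K"
    "(\<integral>X. X \<partial>distr (measure_pmf q) borel (\<lambda>x. x)) = 0"
    unfolding \<nu>_def by simp_all
qed

lemma nondirac_pc_measure_of_balanced_pmf:
  fixes q :: "(real^('n::{finite,linorder})^('m::{finite,linorder})) pmf"
  assumes "finite (set_pmf q)" "set_pmf q \<subseteq> K" "measure_pmf.expectation q minors_vec = 0"
    and x0: "x0 \<in> set_pmf q" "x0 \<noteq> 0"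
  shows "\<exists>\<nu>\<in>pc_measures K. \<not> (\<exists>x. \<nu> = return borel x)"
proof -
  let ?\<nu> = "distr (measure_pmf q) borel (\<lambda>x. x)"
  have "?\<nu> \<noteq> return borel x" for x
  proof
    assume \<nu>_eq: "?\<nu> = return borel x"
    then have "x = 0" using mean_distr_balanced_pmf[OF assms(1-3)] by (simp add: integral_return)
    moreover have "emeasure ?\<nu> {x0} > 0"
      unfolding emeasure_distr_pmf_borel_singleton using x0(1) by (simp add: pmf_positive)
    ultimately show False using \<nu>_eq x0(2) by simp
  qed
  then show ?thesis using distr_balanced_pmf_in_pc_measures[OF assms(1-3)] by blast
qed

lemma nondirac_pc_measure_if_not_has_nonneg_minor_comb:
  fixes V :: "(real^('n::{finite,linorder})^('m::{finite,linorder})) set"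
  assumes "V \<subseteq> K" "V \<noteq> {}" "V \<noteq> {0}" "\<not> has_nonneg_minor_comb V"
  shows "\<exists>\<nu>\<in>pc_measures K. \<not> (\<exists>x. \<nu> = return borel x)"
proof -
  obtain \<zeta>0 where \<zeta>0: "\<zeta>0 \<in> V" "\<zeta>0 \<noteq> 0" using assms(2,3) by blast
  have "\<forall>\<zeta>\<in>V. a \<bullet> minors_vec \<zeta> = 0" if nonneg: "\<forall>\<zeta>\<in>V. 0 \<le> a \<bullet> minors_vec \<zeta>" for a
    using assms(4) nonneg unfolding has_nonneg_minor_comb_def inner_minors_vec by blast
  then have "convex_cone hull (minors_vec ` V) = span (minors_vec ` V)"
    by (intro convex_cone_hull_eq_span) simp
  then have "- minors_vec \<zeta>0 \<in> convex_cone hull (minors_vec ` V)"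
    using \<zeta>0(1) by (simp add: span_base span_neg)
  then obtain q where "finite (set_pmf q)" "set_pmf q \<subseteq> V" "\<zeta>0 \<in> set_pmf q"
      "measure_pmf.expectation q minors_vec = 0"
    using balanced_pmf_exists[OF \<zeta>0(1)] by blast
  then show ?thesis
    using nondirac_pc_measure_of_balanced_pmf \<zeta>0(2) assms(1) by blast
qed

theorem theorem1:
  fixes K :: "(real^('n::{finite,linorder})^('m::{finite,linorder})) set"
  assumes "subspace K"
  shows "(\<forall>\<nu>\<in>pc_measures K. \<exists>x. \<nu> = return borel x) \<longleftrightarrow>
    (\<forall>V. algebraic_cone V \<and> V \<subseteq> K \<and> V \<noteq> {} \<and> V \<noteq> {0} \<longrightarrow>
       (\<exists>\<beta> \<gamma>. ((\<exists>IJ\<in>minor_idx. \<beta> IJ \<noteq> 0) \<or> (\<exists>ij. \<gamma> ij \<noteq> 0)) \<and>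
          (\<forall>\<zeta>\<in>V. minor_comb \<beta> \<gamma> \<zeta> \<ge> 0) \<and>
          (\<exists>\<zeta>\<in>V. minor_comb \<beta> \<gamma> \<zeta> \<noteq> 0)))"
  unfolding has_nonneg_minor_comb_iff[symmetric]
proof (intro iffI allI impI)
  fix V :: "(real^('n::{finite,linorder})^('m::{finite,linorder})) set"
  assume "\<forall>\<nu>\<in>pc_measures K. \<exists>x. \<nu> = return borel x" "algebraic_cone V \<and> V \<subseteq> K \<and> V \<noteq> {} \<and> V \<noteq> {0}"
  then show "has_nonneg_minor_comb V"
    using nondirac_pc_measure_if_not_has_nonneg_minor_comb[of V K] by blast
next
  assume "\<forall>V. algebraic_cone V \<and> V \<subseteq> K \<and> V \<noteq> {} \<and> V \<noteq> {0} \<longrightarrow> has_nonneg_minor_comb V"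
  then show "\<forall>\<nu>\<in>pc_measures K. \<exists>x. \<nu> = return borel x"
    using pc_measures_eq_return[OF assms] by blast
qed

end
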